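(* Let $\sigma\colon\Sigma\to\Sigma$ be a topologically mixing two-sided subshift of finite type with a Gibbs measure $\mu$, $f\colon\Sigma\to\mathbb R$ Lipschitz with $\int f\,d\mu=0$, $F(x,r)=(\sigma x,r+f(x))$ and $\nu=\mu\times\mathrm{Leb}$. If $\Phi\in L^\infty(\nu)$ is a global observable, then $\Phi\circ F$ is a global observable and $\nu_{\mathrm{av}}(\Phi\circ F)=\nu_{\mathrm{av}}(\Phi)$.
   Context: A global observable is a $\Phi\in L^\infty(\nu)$ for which the limit $\nu_{\mathrm{av}}(\Phi)=\lim_{R\to\infty}\frac1{2R}\int_{\Sigma\times[-R,R]}\Phi\,d\nu$ exists. Lipschitz is w.r.t. $d_\theta(x,y)=\theta^{\max\{j:\ x_i=y_i\ \forall|i|<j\}}$ for some $0<\theta<1$. *)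

theory Defs
  imports "HOL-Probability.Probability"
begin

definition SFT :: "('a \<Rightarrow> 'a \<Rightarrow> bool) \<Rightarrow> (int \<Rightarrow> 'a) set" where
  "SFT A = {x. \<forall>i. A (x i) (x (i + 1))}"

definition shift :: "(int \<Rightarrow> 'a) \<Rightarrow> (int \<Rightarrow> 'a)" where
  "shift x = (\<lambda>i. x (i + 1))"

definition dtheta :: "real \<Rightarrow> (int \<Rightarrow> 'a) \<Rightarrow> (int \<Rightarrow> 'a) \<Rightarrow> real" where
  "dtheta \<theta> x y =
     (if x = y then 0 else \<theta> ^ (GREATEST j::nat. \<forall>i::int. \<bar>i\<bar> < int j \<longrightarrow> x i = y i))"

definition open_in_shift :: "real \<Rightarrow> (int \<Rightarrow> 'a) set \<Rightarrow> (int \<Rightarrow> 'a) set \<Rightarrow> bool" where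
  "open_in_shift \<theta> S U \<longleftrightarrow> U \<subseteq> S \<and>
     (\<forall>x\<in>U. \<exists>e>0. \<forall>y\<in>S. dtheta \<theta> x y < e \<longrightarrow> y \<in> U)"

definition top_mixing :: "real \<Rightarrow> (int \<Rightarrow> 'a) set \<Rightarrow> bool" where
  "top_mixing \<theta> S \<longleftrightarrow>
     (\<forall>U V. open_in_shift \<theta> S U \<and> open_in_shift \<theta> S V \<and> U \<noteq> {} \<and> V \<noteq> {} \<longrightarrow>
        (\<exists>N. \<forall>n\<ge>N. (shift ^^ n) ` U \<inter> V \<noteq> {}))"

definition lipschitz_shift :: "real \<Rightarrow> (int \<Rightarrow> 'a) set \<Rightarrow> ((int \<Rightarrow> 'a) \<Rightarrow> real) \<Rightarrow> bool" where
  "lipschitz_shift \<theta> S f \<longleftrightarrow> (\<exists>L. \<forall>x\<in>S. \<forall>y\<in>S. \<bar>f x - f y\<bar> \<le> L * dtheta \<theta> x y)"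

definition cyl :: "(int \<Rightarrow> 'a) set \<Rightarrow> (int \<Rightarrow> 'a) \<Rightarrow> nat \<Rightarrow> (int \<Rightarrow> 'a) set" where
  "cyl S x n = {y\<in>S. \<forall>i::nat. i < n \<longrightarrow> y (int i) = x (int i)}"

definition cylinders :: "(int \<Rightarrow> 'a) set \<Rightarrow> (int \<Rightarrow> 'a) set set" where
  "cylinders S = {{y\<in>S. \<forall>i\<in>I. y i = w i} | I w. finite I}"

definition birkhoff_sum :: "((int \<Rightarrow> 'a) \<Rightarrow> real) \<Rightarrow> nat \<Rightarrow> (int \<Rightarrow> 'a) \<Rightarrow> real" where
  "birkhoff_sum \<phi> n x = (\<Sum>k<n. \<phi> ((shift ^^ k) x))"

definition gibbs_measure :: "(int \<Rightarrow> 'a) set \<Rightarrow> (int \<Rightarrow> 'a) measure \<Rightarrow> bool" where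
  "gibbs_measure S \<mu> \<longleftrightarrow>
     prob_space \<mu> \<and> space \<mu> = S \<and> sets \<mu> = sigma_sets S (cylinders S) \<and>
     shift \<in> measurable \<mu> \<mu> \<and> distr \<mu> \<mu> shift = \<mu> \<and>
     (\<exists>\<phi> \<theta>' P C. 0 < \<theta>' \<and> \<theta>' < 1 \<and> lipschitz_shift \<theta>' S \<phi> \<and> C \<ge> 1 \<and>
        (\<forall>x\<in>S. \<forall>n\<ge>1.
           exp (birkhoff_sum \<phi> n x - real n * P) / C \<le> measure \<mu> (cyl S x n) \<and>
           measure \<mu> (cyl S x n) \<le> C * exp (birkhoff_sum \<phi> n x - real n * P)))"

definition avg_R :: "('b \<times> real) measure \<Rightarrow> 'b set \<Rightarrow> ('b \<times> real \<Rightarrow> real) \<Rightarrow> real \<Rightarrow> real" where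
  "avg_R \<nu> S \<Phi> R = (set_lebesgue_integral \<nu> (S \<times> {-R..R}) \<Phi>) / (2 * R)"

definition global_observable :: "('b \<times> real) measure \<Rightarrow> 'b set \<Rightarrow> ('b \<times> real \<Rightarrow> real) \<Rightarrow> bool" where
  "global_observable \<nu> S \<Phi> \<longleftrightarrow>
     \<Phi> \<in> borel_measurable \<nu> \<and> (\<exists>B. AE p in \<nu>. \<bar>\<Phi> p\<bar> \<le> B) \<and>
     (\<exists>L. (avg_R \<nu> S \<Phi> \<longlongrightarrow> L) at_top)"

definition nu_av :: "('b \<times> real) measure \<Rightarrow> 'b set \<Rightarrow> ('b \<times> real \<Rightarrow> real) \<Rightarrow> real" where
  "nu_av \<nu> S \<Phi> = Lim at_top (avg_R \<nu> S \<Phi>)"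

end

theory Submission
  imports Defs "HOL-Real_Asymp.Real_Asymp"
begin

text \<open>The skew product F(x, r) = (T x, r + f x) over a measure-preserving T preserves
  \<open>\<mu> \<times> Leb\<close>, since it is a translation on every fibre. By this invariance,
  \<open>\<integral>\<^bsub>S\<times>[-R,R]\<^esub> \<Phi> \<circ> F - \<integral>\<^bsub>S\<times>[-R,R]\<^esub> \<Phi>\<close> is the integral of
  \<open>(1\<^bsub>S\<times>[-R,R]\<^esub> - 1\<^bsub>S\<times>[-R,R]\<^esub> \<circ> F) \<cdot> \<Phi> \<circ> F\<close>, which lives on the two strips
  \<open>S \<times> [\<plusminus>R - C, \<plusminus>R + C]\<close> where C bounds \<open>|f|\<close>; so it is at most \<open>4 C \<parallel>\<Phi>\<parallel>\<^sub>\<infinity>\<close>,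
  and the averages over \<open>[-R, R]\<close> differ by \<open>O(1/R)\<close>. A Lipschitz f is bounded because
  \<open>d\<^sub>\<theta> \<le> 1\<close>.\<close>

definition skew_translation :: "('a \<Rightarrow> 'a) \<Rightarrow> ('a \<Rightarrow> real) \<Rightarrow> 'a \<times> real \<Rightarrow> 'a \<times> real" where
  "skew_translation T f = (\<lambda>(x, r). (T x, r + f x))"

lemma measurable_skew_translation:
  assumes "T \<in> M \<rightarrow>\<^sub>M M" "f \<in> borel_measurable M"
  shows "skew_translation T f \<in> M \<Otimes>\<^sub>M lborel \<rightarrow>\<^sub>M M \<Otimes>\<^sub>M lborel"
  unfolding skew_translation_def using assms by measurable

lemma nn_integral_skew_translation:
  assumes T: "T \<in> M \<rightarrow>\<^sub>M M" "distr M M T = M" and f: "f \<in> borel_measurable M"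
    and h: "h \<in> borel_measurable (M \<Otimes>\<^sub>M lborel)"
  shows "(\<integral>\<^sup>+p. h (skew_translation T f p) \<partial>(M \<Otimes>\<^sub>M lborel)) = (\<integral>\<^sup>+p. h p \<partial>(M \<Otimes>\<^sub>M lborel))"
proof -
  have hF: "(\<lambda>p. h (skew_translation T f p)) \<in> borel_measurable (M \<Otimes>\<^sub>M lborel)"
    using measurable_comp[OF measurable_skew_translation[OF T(1) f] h] by (simp add: comp_def)
  have "(\<integral>\<^sup>+p. h (skew_translation T f p) \<partial>(M \<Otimes>\<^sub>M lborel))
      = (\<integral>\<^sup>+x. \<integral>\<^sup>+r. h (T x, r + f x) \<partial>lborel \<partial>M)"
    using lborel.nn_integral_fst[OF hF] by (simp add: skew_translation_def)
  also have "\<dots> = (\<integral>\<^sup>+x. \<integral>\<^sup>+r. h (T x, r) \<partial>lborel \<partial>M)"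
  proof (rule nn_integral_cong)
    fix x assume "x \<in> space M"
    then have "(\<lambda>r. h (T x, r)) \<in> borel_measurable borel"
      using measurable_Pair2[OF h] measurable_space[OF T(1)] by simp
    from nn_integral_real_affine[OF this, of 1 "f x"]
    show "(\<integral>\<^sup>+r. h (T x, r + f x) \<partial>lborel) = (\<integral>\<^sup>+r. h (T x, r) \<partial>lborel)"
      by (simp add: add.commute)
  qed
  also have "\<dots> = (\<integral>\<^sup>+y. \<integral>\<^sup>+r. h (y, r) \<partial>lborel \<partial>distr M M T)"
    by (rule nn_integral_distr[symmetric]) (simp_all add: T(1) lborel.borel_measurable_nn_integral_fst[OF h])
  also have "\<dots> = (\<integral>\<^sup>+p. h p \<partial>(M \<Otimes>\<^sub>M lborel))"
    using lborel.nn_integral_fst[OF h] T(2) by simp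
  finally show ?thesis .
qed

lemma distr_skew_translation:
  assumes T: "T \<in> M \<rightarrow>\<^sub>M M" "distr M M T = M" and f: "f \<in> borel_measurable M"
  shows "distr (M \<Otimes>\<^sub>M lborel) (M \<Otimes>\<^sub>M lborel) (skew_translation T f) = M \<Otimes>\<^sub>M lborel"
proof (rule measure_eqI)
  fix X assume "X \<in> sets (distr (M \<Otimes>\<^sub>M lborel) (M \<Otimes>\<^sub>M lborel) (skew_translation T f))"
  then have X: "X \<in> sets (M \<Otimes>\<^sub>M lborel)" by simp
  note F = measurable_skew_translation[OF T(1) f]
  have "emeasure (distr (M \<Otimes>\<^sub>M lborel) (M \<Otimes>\<^sub>M lborel) (skew_translation T f)) X
      = (\<integral>\<^sup>+p. indicator X p \<partial>distr (M \<Otimes>\<^sub>M lborel) (M \<Otimes>\<^sub>M lborel) (skew_translation T f))"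
    using X by simp
  also have "\<dots> = (\<integral>\<^sup>+p. indicator X (skew_translation T f p) \<partial>(M \<Otimes>\<^sub>M lborel))"
    by (rule nn_integral_distr[OF F]) (use X in simp)
  also have "\<dots> = emeasure (M \<Otimes>\<^sub>M lborel) X"
    using nn_integral_skew_translation[OF T f, of "indicator X"] X by simp
  finally show "emeasure (distr (M \<Otimes>\<^sub>M lborel) (M \<Otimes>\<^sub>M lborel) (skew_translation T f)) X
      = emeasure (M \<Otimes>\<^sub>M lborel) X" .
qed simp

lemma (in prob_space) emeasure_pair_lborel_strip:
  "emeasure (M \<Otimes>\<^sub>M lborel) (space M \<times> {a..b}) = ennreal (b - a)"
  by (cases "a \<le> b") (simp_all add: lborel.emeasure_pair_measure_Times emeasure_space_1 ennreal_neg)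

lemma (in prob_space) measure_pair_lborel_strip:
  "a \<le> b \<Longrightarrow> measure (M \<Otimes>\<^sub>M lborel) (space M \<times> {a..b}) = b - a"
  by (simp add: measure_def emeasure_pair_lborel_strip)

lemma abs_indicator_diff_translate_le:
  fixes R C c r :: real
  assumes "\<bar>c\<bar> \<le> C"
  shows "\<bar>indicator {-R..R} r - indicator {-R..R} (r + c)\<bar>
     \<le> indicator {-R-C..-R+C} r + (indicator {R-C..R+C} r :: real)"
  using assms by (auto simp: indicator_def)

lemma AE_abs_le_skew_translation:
  assumes T: "T \<in> M \<rightarrow>\<^sub>M M" "distr M M T = M" and f: "f \<in> borel_measurable M"
    and g: "g \<in> borel_measurable (M \<Otimes>\<^sub>M lborel)" and g_bound: "AE p in M \<Otimes>\<^sub>M lborel. \<bar>g p\<bar> \<le> B"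
  shows "AE p in M \<Otimes>\<^sub>M lborel. \<bar>g (skew_translation T f p)\<bar> \<le> (B :: real)"
proof -
  have "AE p in distr (M \<Otimes>\<^sub>M lborel) (M \<Otimes>\<^sub>M lborel) (skew_translation T f). \<bar>g p\<bar> \<le> B"
    unfolding distr_skew_translation[OF T f] by (rule g_bound)
  moreover have "{p \<in> space (M \<Otimes>\<^sub>M lborel). \<bar>g p\<bar> \<le> B} \<in> sets (M \<Otimes>\<^sub>M lborel)"
    using g by measurable
  ultimately show ?thesis
    using AE_distr_iff[OF measurable_skew_translation[OF T(1) f]] by simp
qed

lemma set_integral_skew_translation_diff_le:
  fixes g :: "'a \<times> real \<Rightarrow> real"
  assumes M: "prob_space M"
    and T: "T \<in> M \<rightarrow>\<^sub>M M" "distr M M T = M" and f: "f \<in> borel_measurable M"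
    and f_bound: "\<And>x. x \<in> space M \<Longrightarrow> \<bar>f x\<bar> \<le> C"
    and g: "g \<in> borel_measurable (M \<Otimes>\<^sub>M lborel)" and g_bound: "AE p in M \<Otimes>\<^sub>M lborel. \<bar>g p\<bar> \<le> B"
  shows "\<bar>(LINT p:space M \<times> {-R..R}|M \<Otimes>\<^sub>M lborel. g (skew_translation T f p))
          - (LINT p:space M \<times> {-R..R}|M \<Otimes>\<^sub>M lborel. g p)\<bar> \<le> 4 * B * C"
proof -
  interpret prob_space M by fact
  let ?\<nu> = "M \<Otimes>\<^sub>M lborel" and ?F = "skew_translation T f"
  define X where "X = space M \<times> {-R..R}"
  define strips where "strips p = indicator (space M \<times> {-R-C..-R+C}) p
    + (indicator (space M \<times> {R-C..R+C}) p :: real)" for p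
  note F = measurable_skew_translation[OF T(1) f]
  have C: "0 \<le> C"
    using f_bound not_empty by fastforce
  have X: "X \<in> sets ?\<nu>" "emeasure ?\<nu> X < \<infinity>"
    by (auto simp: X_def emeasure_pair_lborel_strip)
  have gF_bound: "AE p in ?\<nu>. \<bar>g (?F p)\<bar> \<le> B"
    by (rule AE_abs_le_skew_translation[OF T f g g_bound])
  have int_gF: "integrable ?\<nu> (\<lambda>p. indicator X p * g (?F p))"
    using gF_bound
    by (intro integrableI_bounded_set_indicator[OF X(1) measurable_comp[OF F g] X(2),
          simplified comp_def real_scaleR_def]) (auto elim: eventually_mono)
  have int_g: "integrable ?\<nu> (\<lambda>p. indicator X p * g p)"
    using g_bound
    by (intro integrableI_bounded_set_indicator[OF X(1) g X(2), simplified real_scaleR_def])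
      (auto elim: eventually_mono)
  have g_X: "(\<lambda>p. indicator X p * g p) \<in> borel_measurable ?\<nu>"
    using X(1) g by measurable
  have int_g_shifted: "integrable ?\<nu> (\<lambda>p. indicator X (?F p) * g (?F p))"
    using integrable_distr_eq[OF F g_X] int_g distr_skew_translation[OF T f] by simp
  have g_shifted: "(LINT p:X|?\<nu>. g p) = (\<integral>p. indicator X (?F p) * g (?F p) \<partial>?\<nu>)"
    using integral_distr[OF F g_X] distr_skew_translation[OF T f]
    by (simp add: set_lebesgue_integral_def)
  define D where "D p = (indicator X p - indicator X (?F p)) * g (?F p)" for p
  have int_D: "integrable ?\<nu> D"
    unfolding D_def left_diff_distrib using int_gF int_g_shifted by simp
  have diff_eq: "(LINT p:X|?\<nu>. g (?F p)) - (LINT p:X|?\<nu>. g p) = (\<integral>p. D p \<partial>?\<nu>)"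
    unfolding D_def left_diff_distrib g_shifted using int_gF int_g_shifted
    by (simp add: set_lebesgue_integral_def)
  have D_bound: "AE p in ?\<nu>. \<bar>D p\<bar> \<le> B * strips p"
    using gF_bound
  proof (rule AE_mp, intro AE_I2 impI)
    fix p assume p: "p \<in> space ?\<nu>" and gF: "\<bar>g (?F p)\<bar> \<le> B"
    obtain x r where p_eq: "p = (x, r)" by fastforce
    have x: "x \<in> space M" "T x \<in> space M"
      using p measurable_space[OF T(1)] by (auto simp: p_eq space_pair_measure)
    have "\<bar>D p\<bar> = \<bar>indicator {-R..R} r - indicator {-R..R} (r + f x)\<bar> * \<bar>g (?F p)\<bar>"
      using x by (simp add: D_def X_def p_eq skew_translation_def indicator_def abs_mult)
    also have "\<dots> \<le> (indicator {-R-C..-R+C} r + indicator {R-C..R+C} r) * B"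
      using abs_indicator_diff_translate_le[OF f_bound[OF x(1)], of R r] gF
      by (intro mult_mono) auto
    also have "\<dots> = B * strips p"
      using x by (simp add: strips_def p_eq indicator_def)
    finally show "\<bar>D p\<bar> \<le> B * strips p" .
  qed
  have int_strip: "integrable ?\<nu> (indicator (space M \<times> {a..b}) :: _ \<Rightarrow> real)" for a b :: real
    by (intro integrable_real_indicator) (auto simp: emeasure_pair_lborel_strip)
  have integral_strip: "(\<integral>p. indicator (space M \<times> {a..b}) p \<partial>?\<nu>) = b - a" if "a \<le> b" for a b :: real
    using that by (simp add: emeasure_pair_lborel_strip measure_pair_lborel_strip)
  have int_strips: "integrable ?\<nu> strips"
    unfolding strips_def using int_strip by simp
  have integral_strips: "(\<integral>p. strips p \<partial>?\<nu>) = 4 * C"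
    unfolding strips_def using int_strip integral_strip C by simp
  have "\<bar>\<integral>p. D p \<partial>?\<nu>\<bar> \<le> (\<integral>p. \<bar>D p\<bar> \<partial>?\<nu>)"
    by (rule integral_abs_bound)
  also have "\<dots> \<le> (\<integral>p. B * strips p \<partial>?\<nu>)"
    using int_D int_strips D_bound by (intro integral_mono_AE) auto
  also have "\<dots> = 4 * B * C"
    using integral_strips by simp
  finally show ?thesis
    using diff_eq by (simp add: X_def)
qed

lemma global_observable_skew_translation:
  assumes M: "prob_space M"
    and T: "T \<in> M \<rightarrow>\<^sub>M M" "distr M M T = M" and f: "f \<in> borel_measurable M"
    and f_bound: "\<And>x. x \<in> space M \<Longrightarrow> \<bar>f x\<bar> \<le> C"
    and glob: "global_observable (M \<Otimes>\<^sub>M lborel) (space M) \<Phi>"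
  shows "global_observable (M \<Otimes>\<^sub>M lborel) (space M) (\<Phi> \<circ> skew_translation T f)
    \<and> nu_av (M \<Otimes>\<^sub>M lborel) (space M) (\<Phi> \<circ> skew_translation T f)
        = nu_av (M \<Otimes>\<^sub>M lborel) (space M) \<Phi>"
proof -
  let ?avg = "avg_R (M \<Otimes>\<^sub>M lborel) (space M)" and ?F = "skew_translation T f"
  from glob obtain B L where \<Phi>: "\<Phi> \<in> borel_measurable (M \<Otimes>\<^sub>M lborel)"
    and \<Phi>_bound: "AE p in M \<Otimes>\<^sub>M lborel. \<bar>\<Phi> p\<bar> \<le> B" and lim: "(?avg \<Phi> \<longlongrightarrow> L) at_top"
    unfolding global_observable_def by blast
  have avg_diff: "\<bar>?avg (\<Phi> \<circ> ?F) R - ?avg \<Phi> R\<bar> \<le> 2 * B * C / R" if "R > 0" for R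
  proof -
    have "\<bar>?avg (\<Phi> \<circ> ?F) R - ?avg \<Phi> R\<bar>
        = \<bar>(LINT p:space M \<times> {-R..R}|M \<Otimes>\<^sub>M lborel. \<Phi> (?F p))
           - (LINT p:space M \<times> {-R..R}|M \<Otimes>\<^sub>M lborel. \<Phi> p)\<bar> / (2 * R)"
      using that by (simp add: avg_R_def comp_def diff_divide_distrib[symmetric])
    also have "\<dots> \<le> 4 * B * C / (2 * R)"
      using set_integral_skew_translation_diff_le[OF M T f f_bound \<Phi> \<Phi>_bound] that
      by (intro divide_right_mono) auto
    finally show ?thesis
      by simp
  qed
  have "((\<lambda>R. ?avg (\<Phi> \<circ> ?F) R - ?avg \<Phi> R) \<longlongrightarrow> 0) at_top"
  proof (rule Lim_null_comparison)
    show "\<forall>\<^sub>F R in at_top. norm (?avg (\<Phi> \<circ> ?F) R - ?avg \<Phi> R) \<le> 2 * B * C / R"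
      using eventually_gt_at_top[of 0] by eventually_elim (simp add: avg_diff)
    show "((\<lambda>R. 2 * B * C / R) \<longlongrightarrow> 0) at_top"
      by real_asymp
  qed
  from tendsto_add[OF this lim] have lim_F: "(?avg (\<Phi> \<circ> ?F) \<longlongrightarrow> L) at_top"
    by simp
  have "global_observable (M \<Otimes>\<^sub>M lborel) (space M) (\<Phi> \<circ> ?F)"
    unfolding global_observable_def
    using measurable_comp[OF measurable_skew_translation[OF T(1) f] \<Phi>] lim_F
      AE_abs_le_skew_translation[OF T f \<Phi> \<Phi>_bound] by (auto simp: comp_def)
  then show ?thesis
    using tendsto_Lim[OF _ lim] tendsto_Lim[OF _ lim_F] by (simp add: nu_av_def)
qed

lemma lipschitz_shift_bounded:
  assumes "0 \<le> \<theta>" "\<theta> \<le> 1" and "lipschitz_shift \<theta> S f"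
  obtains C where "\<And>x. x \<in> S \<Longrightarrow> \<bar>f x\<bar> \<le> C"
proof (cases "S = {}")
  case False
  then obtain x0 where x0: "x0 \<in> S" by blast
  from assms(3) obtain L where L: "\<And>x. x \<in> S \<Longrightarrow> \<bar>f x - f x0\<bar> \<le> L * dtheta \<theta> x x0"
    unfolding lipschitz_shift_def using x0 by blast
  have d: "0 \<le> dtheta \<theta> x x0" "dtheta \<theta> x x0 \<le> 1" for x
    using assms(1,2) by (simp_all add: dtheta_def power_le_one)
  have "\<bar>f x\<bar> \<le> \<bar>f x0\<bar> + \<bar>L\<bar>" if "x \<in> S" for x
  proof -
    have "\<bar>f x - f x0\<bar> \<le> \<bar>L\<bar> * dtheta \<theta> x x0"
      using L[OF that] d[of x] by (meson abs_ge_self mult_right_mono order_trans)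
    also have "\<dots> \<le> \<bar>L\<bar>"
      using d[of x] by (simp add: mult_left_le)
    finally show ?thesis
      by linarith
  qed
  then show ?thesis
    by (rule that)
qed auto

theorem lemma3p2:
  fixes A :: "'a::finite \<Rightarrow> 'a \<Rightarrow> bool"
    and \<theta> :: real
    and \<mu> :: "(int \<Rightarrow> 'a) measure"
    and f :: "(int \<Rightarrow> 'a) \<Rightarrow> real"
    and \<Phi> :: "(int \<Rightarrow> 'a) \<times> real \<Rightarrow> real"
  assumes theta: "0 < \<theta>" "\<theta> < 1"
    and mixing: "top_mixing \<theta> (SFT A)"
    and gibbs: "gibbs_measure (SFT A) \<mu>"
    and f_lip: "lipschitz_shift \<theta> (SFT A) f"
    and f_meas: "f \<in> borel_measurable \<mu>"
    and f_mean: "integral\<^sup>L \<mu> f = 0"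
    and glob: "global_observable (\<mu> \<Otimes>\<^sub>M lborel) (SFT A) \<Phi>"
  shows "global_observable (\<mu> \<Otimes>\<^sub>M lborel) (SFT A) (\<Phi> \<circ> (\<lambda>(x, r). (shift x, r + f x)))
    \<and> nu_av (\<mu> \<Otimes>\<^sub>M lborel) (SFT A) (\<Phi> \<circ> (\<lambda>(x, r). (shift x, r + f x)))
        = nu_av (\<mu> \<Otimes>\<^sub>M lborel) (SFT A) \<Phi>"
proof -
  from gibbs have \<mu>: "prob_space \<mu>" "space \<mu> = SFT A"
    and shift: "shift \<in> \<mu> \<rightarrow>\<^sub>M \<mu>" "distr \<mu> \<mu> shift = \<mu>"
    unfolding gibbs_measure_def by auto
  obtain C where "\<And>x. x \<in> space \<mu> \<Longrightarrow> \<bar>f x\<bar> \<le> C"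
    using lipschitz_shift_bounded[OF _ _ f_lip] theta \<mu>(2) by auto
  from global_observable_skew_translation[OF \<mu>(1) shift f_meas this] glob
  show ?thesis
    by (simp add: \<mu>(2) skew_translation_def)
qed

end
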